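(* Let $f$ be a convex function on $\mathbb{R}^m$ and let $C,C'\subset\mathbb{R}^m$ be open convex sets such that $f|_C$ and $f|_{C'}$ are affine. Suppose $v\in\operatorname{recc}(C)\cap\operatorname{recc}(C')$. Then $\nabla_vf(x)=\nabla_vf(x')$ for all $x\in C$, $x'\in C'$, where $\nabla_v$ denotes the directional derivative in direction $v$.
   Context: $\operatorname{recc}(S)=\{v\in\mathbb{R}^m:\forall x\in S,\ x+v\in S\}$ is the recession cone of a convex set $S$. *)

theory Defs
  imports "HOL-Analysis.Analysis"
begin

definition recc :: "'a::real_vector set \<Rightarrow> 'a set" where
  "recc S = {v. \<forall>x\<in>S. x + v \<in> S}"

definition affine_on :: "'a::real_vector set \<Rightarrow> ('a \<Rightarrow> real) \<Rightarrow> bool" where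
  "affine_on S f \<longleftrightarrow> (\<exists>l c. linear l \<and> (\<forall>x\<in>S. f x = l x + c))"

definition has_dir_deriv :: "('a::real_vector \<Rightarrow> real) \<Rightarrow> 'a \<Rightarrow> 'a \<Rightarrow> real \<Rightarrow> bool" where
  "has_dir_deriv f x v D \<longleftrightarrow> ((\<lambda>t. (f (x + t *\<^sub>R v) - f x) / t) \<longlongrightarrow> D) (at_right 0)"

end

theory Submission
  imports Defs
begin

text \<open>On each of C and C' the function f grows linearly along the ray in direction v, with slopes
  a and b. If b > a, then the midpoint of x + 2t v and 2x' - x is x' + t v, so convexity of f gives
  t (b - a) \<le> const for every t \<ge> 0, which is absurd; by symmetry a = b. On an affine piece the
  directional derivative is exactly this slope.\<close>

lemma recc_ray_of_nat:
  assumes "x \<in> S" "v \<in> recc S"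
  shows "x + real n *\<^sub>R v \<in> S"
proof (induction n)
  case 0
  then show ?case using assms(1) by simp
next
  case (Suc n)
  then have "(x + real n *\<^sub>R v) + v \<in> S" using assms(2) by (simp add: recc_def)
  then show ?case by (simp add: algebra_simps)
qed

lemma convex_recc_ray:
  assumes "convex S" "x \<in> S" "v \<in> recc S" "0 \<le> t"
  shows "x + t *\<^sub>R v \<in> S"
proof -
  obtain n :: nat where n: "t < real n" using reals_Archimedean2 by blast
  then have "0 < real n" using assms(4) by linarith
  have "(1 - t / n) *\<^sub>R x + (t / n) *\<^sub>R (x + real n *\<^sub>R v) \<in> S"
    using convexD_alt[OF assms(1,2) recc_ray_of_nat[OF assms(2,3)]] n assms(4) by simp
  moreover have "(1 - t / n) *\<^sub>R x + (t / n) *\<^sub>R (x + real n *\<^sub>R v) = x + t *\<^sub>R v"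
    using \<open>0 < real n\<close> by (simp add: algebra_simps)
  ultimately show ?thesis by simp
qed

lemma affine_restriction_along_line:
  assumes "linear l" "\<forall>y\<in>S. f y = l y + c" "x \<in> S" "x + t *\<^sub>R v \<in> S"
  shows "f (x + t *\<^sub>R v) = f x + t * l v"
  using assms by (simp add: linear_add linear_scale)

lemma convex_on_ray_slope_le:
  fixes f :: "'a::real_vector \<Rightarrow> real"
  assumes convex: "convex_on UNIV f"
    and ray: "\<And>t. 0 \<le> t \<Longrightarrow> f (x + t *\<^sub>R v) = f x + t * a"
    and ray': "\<And>t. 0 \<le> t \<Longrightarrow> f (x' + t *\<^sub>R v) = f x' + t * b"
  shows "b \<le> a"
proof (rule ccontr)
  assume "\<not> b \<le> a"
  then have "0 < b - a" by simp
  define K where "K = f x / 2 + f (2 *\<^sub>R x' - x) / 2 - f x'"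
  have bound: "t * (b - a) \<le> K" if "0 \<le> t" for t
  proof -
    have "x' + t *\<^sub>R v = (1 - 1/2) *\<^sub>R (2 *\<^sub>R x' - x) + (1/2::real) *\<^sub>R (x + (2 * t) *\<^sub>R v)"
      by (simp add: algebra_simps)
    then have "f (x' + t *\<^sub>R v) \<le> f (2 *\<^sub>R x' - x) / 2 + f (x + (2 * t) *\<^sub>R v) / 2"
      using convex_onD[OF convex, of "1/2" "2 *\<^sub>R x' - x" "x + (2 * t) *\<^sub>R v"] by simp
    then show ?thesis
      using ray[of "2 * t"] ray'[of t] that unfolding K_def by (simp add: field_simps)
  qed
  have "(\<bar>K\<bar> + 1) / (b - a) * (b - a) \<le> K"
    using bound[of "(\<bar>K\<bar> + 1) / (b - a)"] \<open>0 < b - a\<close> by simp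
  then show False using \<open>0 < b - a\<close> by simp
qed

lemma has_dir_deriv_affine_restriction:
  assumes "convex S" "linear l" "\<forall>y\<in>S. f y = l y + c" "x \<in> S" "v \<in> recc S"
  shows "has_dir_deriv f x v (l v)"
proof -
  have "\<forall>\<^sub>F t in at_right 0. l v = (f (x + t *\<^sub>R v) - f x) / t"
  proof (rule eventually_mono[OF eventually_at_right_less])
    fix t :: real
    assume "0 < t"
    then have "f (x + t *\<^sub>R v) = f x + t * l v"
      using affine_restriction_along_line[OF assms(2-4) convex_recc_ray[OF assms(1,4,5)]] by simp
    then show "l v = (f (x + t *\<^sub>R v) - f x) / t" using \<open>0 < t\<close> by simp
  qed
  then show ?thesis
    unfolding has_dir_deriv_def by (rule Lim_transform_eventually[OF tendsto_const])
qed

theorem mainTheorem16: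
  fixes f :: "real ^ 'm \<Rightarrow> real" and C C' :: "(real ^ 'm) set" and v :: "real ^ 'm"
  assumes "convex_on UNIV f"
    and "open C" and "convex C" and "open C'" and "convex C'"
    and "affine_on C f" and "affine_on C' f"
    and "v \<in> recc C \<inter> recc C'"
  shows "\<forall>x\<in>C. \<forall>x'\<in>C'. \<exists>D. has_dir_deriv f x v D \<and> has_dir_deriv f x' v D"
proof (intro ballI)
  fix x x' assume x: "x \<in> C" and x': "x' \<in> C'"
  obtain l c where l: "linear l" "\<forall>y\<in>C. f y = l y + c"
    using assms(6) unfolding affine_on_def by blast
  obtain l' c' where l': "linear l'" "\<forall>y\<in>C'. f y = l' y + c'"
    using assms(7) unfolding affine_on_def by blast
  have v: "v \<in> recc C" "v \<in> recc C'" using assms(8) by auto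
  have ray: "f (x + t *\<^sub>R v) = f x + t * l v" if "0 \<le> t" for t
    using affine_restriction_along_line[OF l x convex_recc_ray[OF assms(3) x v(1) that]] .
  have ray': "f (x' + t *\<^sub>R v) = f x' + t * l' v" if "0 \<le> t" for t
    using affine_restriction_along_line[OF l' x' convex_recc_ray[OF assms(5) x' v(2) that]] .
  have "l v = l' v"
    using convex_on_ray_slope_le[OF assms(1) ray ray'] convex_on_ray_slope_le[OF assms(1) ray' ray]
    by simp
  then show "\<exists>D. has_dir_deriv f x v D \<and> has_dir_deriv f x' v D"
    using has_dir_deriv_affine_restriction[OF assms(3) l x v(1)]
      has_dir_deriv_affine_restriction[OF assms(5) l' x' v(2)] by metis
qed

end
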